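(* Let $n\ge 2$ and $q\ge1$ be integers and let $S\subset Q_{q*}^n$ be an $A(n,q,n-1,n-2)$ design. Let $V\subset Q_{q*}^{2n}$ be the set of all concatenations $(s,x)$ with $s\in S$, $x\in Q_q^n$, together with all concatenations $(x,s)$ with $x\in Q_q^n$, $s\in S$. Then $V$ is an $A(2n,q,2n-1,2n-2)$ design.
   Context: For an integer $q\ge1$, $Q_q=\{0,1,\dots,q-1\}$ and $Q_{q*}=Q_q\cup\{*\}$. The weight of a word $u\in Q_{q*}^n$ is $n$ minus the number of $*$ symbols in $u$. For $u,v\in Q_{q*}^n$ we say $u$ extends $v$ if $u_i=v_i$ for every position $i$ with $v_i\neq *$. For integers $n\ge w\ge t\ge 1$, an $A(n,q,w,t)$ design is a set $S$ of words of weight $t$ in $Q_{q*}^n$ such that every word of weight $w$ in $Q_{q*}^n$ extends exactly one element of $S$. *)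

theory Defs
  imports Main
begin

text \<open>Words in Q_{q*}^n are lists of length n over nat option; None is the star symbol,
  Some a with a < q is a symbol of Q_q.\<close>

definition words :: "nat \<Rightarrow> nat \<Rightarrow> nat option list set" where
  "words q n = {u. length u = n \<and> (\<forall>i<n. \<forall>a. u ! i = Some a \<longrightarrow> a < q)}"

definition full_words :: "nat \<Rightarrow> nat \<Rightarrow> nat option list set" where
  "full_words q n = {u \<in> words q n. \<forall>i<n. u ! i \<noteq> None}"

definition weight :: "nat option list \<Rightarrow> nat" where
  "weight u = length u - card {i. i < length u \<and> u ! i = None}"

definition extends :: "nat option list \<Rightarrow> nat option list \<Rightarrow> bool" where
  "extends u v \<longleftrightarrow> length u = length v \<and> (\<forall>i<length v. v ! i \<noteq> None \<longrightarrow> u ! i = v ! i)"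

definition is_design :: "nat \<Rightarrow> nat \<Rightarrow> nat \<Rightarrow> nat \<Rightarrow> nat option list set \<Rightarrow> bool" where
  "is_design n q w t S \<longleftrightarrow>
     S \<subseteq> {u \<in> words q n. weight u = t} \<and>
     (\<forall>u \<in> words q n. weight u = w \<longrightarrow> (\<exists>!s. s \<in> S \<and> extends u s))"

end

theory Submission
  imports Defs
begin

text \<open>The construction works for any two designs S and T of lengths m and n with the same
  number of stars in their blocks. A word of weight m + n - 1 (one star) splits into halves of
  lengths m and n of which exactly one carries the star, the other being a full word. Since a
  full word is extended only by itself, the blocks under the word are exactly the blocks of the
  starred half's design under that half, completed by the full half, so uniqueness is
  inherited.\<close>

lemma ex1_image_inj:
  assumes "\<exists>!x. P x" and "inj f"
  shows "\<exists>!y. \<exists>x. P x \<and> y = f x"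
  using assms unfolding inj_def by blast

lemma weight_eq_length_filter: "weight u = length (filter (\<lambda>x. x \<noteq> None) u)"
  unfolding weight_def
  using length_filter_conv_card[of "\<lambda>x. x = None" u]
        sum_length_filter_compl[of "\<lambda>x. x = None" u] by simp

lemma weight_append: "weight (a @ b) = weight a + weight b"
  by (simp add: weight_eq_length_filter)

lemma weight_le_length: "weight u \<le> length u"
  by (simp add: weight_eq_length_filter)

lemma weight_eq_length_iff: "weight u = length u \<longleftrightarrow> None \<notin> set u"
proof -
  have "length (filter (\<lambda>x. x \<noteq> None) u) = length u \<longleftrightarrow> (\<forall>x\<in>set u. x \<noteq> None)"
    using length_filter_less[of _ u "\<lambda>x. x \<noteq> None"] by (fastforce simp: filter_id_conv)
  then show ?thesis
    by (auto simp: weight_eq_length_filter)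
qed

lemma length_words: "u \<in> words q n \<Longrightarrow> length u = n"
  by (simp add: words_def)

lemma full_words_iff: "x \<in> full_words q n \<longleftrightarrow> x \<in> words q n \<and> weight x = n"
  by (auto simp: full_words_def words_def weight_eq_length_iff in_set_conv_nth)

lemma append_in_words_iff:
  assumes "length a = m"
  shows "a @ b \<in> words q (m + n) \<longleftrightarrow> a \<in> words q m \<and> b \<in> words q n"
proof
  assume ab: "a @ b \<in> words q (m + n)"
  then have "length b = n"
    using assms by (simp add: words_def)
  have symbols: "(a @ b) ! i = Some c \<Longrightarrow> c < q" if "i < m + n" for i c
    using ab that by (simp add: words_def)
  have "c < q" if "i < m" "a ! i = Some c" for i c
    using symbols[of i c] that assms by (simp add: nth_append)
  moreover have "c < q" if "i < n" "b ! i = Some c" for i c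
    using symbols[of "m + i" c] that assms by (simp add: nth_append)
  moreover note \<open>length b = n\<close>
  ultimately show "a \<in> words q m \<and> b \<in> words q n"
    using assms by (simp add: words_def)
next
  assume "a \<in> words q m \<and> b \<in> words q n"
  then have "length b = n"
    and "\<forall>i<m. \<forall>c. a ! i = Some c \<longrightarrow> c < q" and "\<forall>i<n. \<forall>c. b ! i = Some c \<longrightarrow> c < q"
    by (simp_all add: words_def)
  moreover have "i < m \<or> i - m < n" if "i < m + n" for i
    using that by linarith
  ultimately show "a @ b \<in> words q (m + n)"
    using assms by (auto simp: words_def nth_append)
qed

lemma extends_refl: "extends u u"
  by (simp add: extends_def)

lemma extends_append_iff:
  assumes "length a = length c"
  shows "extends (a @ b) (c @ d) \<longleftrightarrow> extends a c \<and> extends b d"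
proof
  assume ext: "extends (a @ b) (c @ d)"
  then have "length b = length d"
    using assms by (simp add: extends_def)
  moreover have "c ! i \<noteq> None \<Longrightarrow> a ! i = c ! i" if "i < length c" for i
    using ext that assms unfolding extends_def
    by (auto dest!: spec[of _ i] simp: nth_append)
  moreover have "d ! i \<noteq> None \<Longrightarrow> b ! i = d ! i" if "i < length d" for i
    using ext that assms unfolding extends_def
    by (auto dest!: spec[of _ "length c + i"] simp: nth_append)
  ultimately show "extends a c \<and> extends b d"
    using assms by (simp add: extends_def)
next
  assume "extends a c \<and> extends b d"
  then show "extends (a @ b) (c @ d)"
    using assms unfolding extends_def by (auto simp: nth_append)
qed

lemma extends_full_word_eq: "extends u x \<Longrightarrow> x \<in> full_words q n \<Longrightarrow> u = x"
  unfolding extends_def full_words_def words_def by (auto intro: nth_equalityI)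

lemma split_weight_one_star:
  assumes "weight (a @ b) = length a + length b - 1" and "length a + length b \<ge> 1"
  shows "weight a = length a - 1 \<and> weight b = length b \<or>
         weight a = length a \<and> weight b = length b - 1"
  using assms weight_le_length[of a] weight_le_length[of b]
  by (simp add: weight_append) linarith

lemma extends_glued_block_iff:
  assumes len_a: "length a = m" and len_b: "length b = n"
    and "S \<subseteq> words q m" "T \<subseteq> words q n"
  shows "(v \<in> {s @ x | s x. s \<in> S \<and> x \<in> full_words q n} \<union>
              {x @ t | x t. x \<in> full_words q m \<and> t \<in> T}) \<and> extends (a @ b) v \<longleftrightarrow>
         (\<exists>s\<in>S. extends a s \<and> b \<in> full_words q n \<and> v = s @ b) \<or>
         (\<exists>t\<in>T. a \<in> full_words q m \<and> extends b t \<and> v = a @ t)"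
    (is "?lhs \<longleftrightarrow> ?left \<or> ?right")
proof -
  have len_S: "s \<in> S \<Longrightarrow> length s = length a" for s
    using assms by (auto dest: length_words)
  have len_full: "x \<in> full_words q m \<Longrightarrow> length x = length a" for x
    using len_a by (auto simp: full_words_def dest: length_words)
  show ?thesis
  proof
    assume ?lhs
    then consider s x where "s \<in> S" "x \<in> full_words q n" "v = s @ x" "extends (a @ b) (s @ x)"
      | x t where "x \<in> full_words q m" "t \<in> T" "v = x @ t" "extends (a @ b) (x @ t)"
      by blast
    then show "?left \<or> ?right"
    proof cases
      case 1
      then have "extends a s" "b = x"
        using len_S extends_append_iff extends_full_word_eq by metis+
      with 1 show ?thesis by blast
    next
      case 2
      then have "a = x" "extends b t"
        using len_full extends_append_iff extends_full_word_eq by metis+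
      with 2 show ?thesis by blast
    qed
  next
    assume "?left \<or> ?right"
    then show ?lhs
    proof
      assume ?left
      then obtain s where "s \<in> S" "extends a s" "b \<in> full_words q n" "v = s @ b"
        by blast
      then show ?lhs
        using len_S by (auto simp: extends_append_iff extends_refl)
    next
      assume ?right
      then obtain t where "t \<in> T" "a \<in> full_words q m" "extends b t" "v = a @ t"
        by blast
      then show ?lhs
        by (auto simp: extends_append_iff extends_refl)
    qed
  qed
qed

lemma is_design_glue_full_words:
  assumes S: "is_design m q (m - 1) (m - d) S" and T: "is_design n q (n - 1) (n - d) T"
    and "m \<ge> 1" "n \<ge> 1" "d \<le> m" "d \<le> n"
  shows "is_design (m + n) q (m + n - 1) (m + n - d)
           ({s @ x | s x. s \<in> S \<and> x \<in> full_words q n} \<union>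
            {x @ t | x t. x \<in> full_words q m \<and> t \<in> T})"
proof -
  let ?V = "{s @ x | s x. s \<in> S \<and> x \<in> full_words q n} \<union>
            {x @ t | x t. x \<in> full_words q m \<and> t \<in> T}"
  have S_words: "S \<subseteq> words q m" and S_weight: "\<And>s. s \<in> S \<Longrightarrow> weight s = m - d"
    and S_unique: "\<And>a. a \<in> words q m \<Longrightarrow> weight a = m - 1 \<Longrightarrow> \<exists>!s. s \<in> S \<and> extends a s"
    using S by (auto simp: is_design_def)
  have T_words: "T \<subseteq> words q n" and T_weight: "\<And>t. t \<in> T \<Longrightarrow> weight t = n - d"
    and T_unique: "\<And>b. b \<in> words q n \<Longrightarrow> weight b = n - 1 \<Longrightarrow> \<exists>!t. t \<in> T \<and> extends b t"
    using T by (auto simp: is_design_def)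
  have glued_block: "a @ b \<in> words q (m + n) \<and> weight (a @ b) = m + n - d"
    if "a \<in> words q m" "b \<in> words q n" "weight a + weight b = m + n - d" for a b
    using that append_in_words_iff[OF length_words[OF that(1)]] by (simp add: weight_append)
  have blocks: "?V \<subseteq> {v \<in> words q (m + n). weight v = m + n - d}"
  proof
    fix v assume "v \<in> ?V"
    then consider s x where "s \<in> S" "x \<in> full_words q n" "v = s @ x"
      | x t where "x \<in> full_words q m" "t \<in> T" "v = x @ t"
      by blast
    then show "v \<in> {v \<in> words q (m + n). weight v = m + n - d}"
    proof cases
      case 1
      then show ?thesis
        using glued_block[of s x] S_words S_weight \<open>d \<le> m\<close> by (auto simp: full_words_iff)
    next
      case 2
      then show ?thesis
        using glued_block[of x t] T_words T_weight \<open>d \<le> n\<close> by (auto simp: full_words_iff)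
    qed
  qed
  have unique_block: "\<exists>!v. v \<in> ?V \<and> extends u v"
    if u: "u \<in> words q (m + n)" "weight u = m + n - 1" for u
  proof -
    define a b where "a = take m u" and "b = drop m u"
    have u_eq: "u = a @ b" and len_a: "length a = m"
      using length_words[OF u(1)] by (simp_all add: a_def b_def)
    then have a: "a \<in> words q m" and b: "b \<in> words q n"
      using u(1) append_in_words_iff[OF len_a] by simp_all
    have len_b: "length b = n"
      using b by (rule length_words)
    have extends_iff: "v \<in> ?V \<and> extends u v \<longleftrightarrow>
        (\<exists>s\<in>S. extends a s \<and> b \<in> full_words q n \<and> v = s @ b) \<or>
        (\<exists>t\<in>T. a \<in> full_words q m \<and> extends b t \<and> v = a @ t)" for v
      unfolding u_eq by (rule extends_glued_block_iff[OF len_a len_b S_words T_words])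
    from split_weight_one_star[of a b] u(2) \<open>m \<ge> 1\<close> len_a len_b
    consider "weight a = m - 1" "weight b = n" | "weight a = m" "weight b = n - 1"
      by (auto simp: u_eq)
    then show ?thesis
    proof cases
      case 1
      then have "a \<notin> full_words q m" "b \<in> full_words q n"
        using \<open>m \<ge> 1\<close> b by (auto simp: full_words_iff)
      then have "v \<in> ?V \<and> extends u v \<longleftrightarrow> (\<exists>s. (s \<in> S \<and> extends a s) \<and> v = s @ b)" for v
        unfolding extends_iff by blast
      then show ?thesis
        using ex1_image_inj[OF S_unique[OF a 1(1)], of "\<lambda>s. s @ b"] by (simp add: inj_def)
    next
      case 2
      then have "a \<in> full_words q m" "b \<notin> full_words q n"
        using \<open>n \<ge> 1\<close> a by (auto simp: full_words_iff)
      then have "v \<in> ?V \<and> extends u v \<longleftrightarrow> (\<exists>t. (t \<in> T \<and> extends b t) \<and> v = a @ t)" for v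
        unfolding extends_iff by blast
      then show ?thesis
        using ex1_image_inj[OF T_unique[OF b 2(2)], of "\<lambda>t. a @ t"] by (simp add: inj_def)
    qed
  qed
  show ?thesis
    unfolding is_design_def by (intro conjI ballI impI blocks unique_block)
qed

theorem proposition4:
  fixes n q :: nat and S :: "nat option list set"
  assumes "n \<ge> 2" and "q \<ge> 1"
    and "is_design n q (n - 1) (n - 2) S"
  shows "is_design (2 * n) q (2 * n - 1) (2 * n - 2)
           ({s @ x | s x. s \<in> S \<and> x \<in> full_words q n} \<union>
            {x @ s | x s. x \<in> full_words q n \<and> s \<in> S})"
  using is_design_glue_full_words[OF assms(3) assms(3)] assms(1) by (simp add: mult_2)

end
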